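(* Let $f:X\to Y$ and $g:X'\to Y'$ be morphisms in $\mathcal{C}_{\mathcal{I}}^J(\mathcal{P}(\Lambda))$ such that $f$ is isomorphic to $g$ in $\mathcal{K}_{\mathcal{I}}^J(\mathcal{P}(\Lambda))$, i.e. there are isomorphisms $\alpha:X\to X'$ and $\beta:Y\to Y'$ in $\mathcal{K}_{\mathcal{I}}^J(\mathcal{P}(\Lambda))$ with $[g]\alpha=\beta[f]$. Then: (a) if $f$ is smonic, then $g$ is smonic; (b) if $f$ is sepic, then $g$ is sepic; (c) if $f$ and $g$ are irreducible and $f$ is sirreducible, then $g$ is sirreducible.
   Context: $\Lambda$ is a finite-dimensional non-semisimple algebra over a field $k$, $\mathcal{P}(\Lambda)$ the category of finitely generated projective right $\Lambda$-modules; $\mathcal{I}$ is the ideal of radical morphisms (those whose image lies in the radical of the target). For an interval $J\subseteq\mathbb{Z}$, $\mathcal{C}_{\mathcal{I}}^J(\mathcal{P}(\Lambda))$ is the category of cochain complexes of finitely generated projective $\Lambda$-modules vanishing outside $J$ with radical differentials, and $\mathcal{K}_{\mathcal{I}}^J(\mathcal{P}(\Lambda))$ its homotopy category; $[f]$ denotes the homotopy class of $f$. A morphism of complexes $f=(f^n)$ is smonic if all $f^n$ are split monomorphisms, sepic if all $f^n$ are split epimorphisms, and sirreducible if there is exactly one index $i_0$ with $f^{i_0}$ irreducible in $\mathcal{P}(\Lambda)$, $f^n$ a split epimorphism for $n<i_0$ and a split monomorphism for $n>i_0$. *)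

theory Defs
  imports "Jordan_Normal_Form.Matrix"
begin

definition fd_algebra :: "('k::field \<Rightarrow> 'a::ring_1) \<Rightarrow> bool" where
  "fd_algebra emb \<longleftrightarrow>
     emb 1 = 1 \<and> (\<forall>c d. emb (c + d) = emb c + emb d) \<and> (\<forall>c d. emb (c * d) = emb c * emb d)
     \<and> (\<forall>c x. emb c * x = x * emb c)
     \<and> (\<exists>bs :: 'a list. \<forall>x. \<exists>cs :: 'k list. length cs = length bs \<and>
            x = (\<Sum>i<length bs. emb (cs ! i) * bs ! i))"

text \<open>A f.g. projective right Lambda-module is modelled (up to isomorphism) as
  e Lambda^n for an idempotent n x n matrix e; elements are column vectors, Lambda
  acts on the right entrywise, and morphisms e Lambda^n \<rightarrow> e' Lambda^m are m x n
  matrices A with e' A = A = A e, acting by left multiplication.\<close>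

type_synonym 'a pobj = "nat \<times> 'a mat"

definition pobj :: "'a::ring_1 pobj \<Rightarrow> bool" where
  "pobj X \<longleftrightarrow> snd X \<in> carrier_mat (fst X) (fst X) \<and> snd X * snd X = snd X"

definition pmod :: "'a::ring_1 pobj \<Rightarrow> 'a vec set" where
  "pmod X = {v \<in> carrier_vec (fst X). snd X *\<^sub>v v = v}"

definition rsmult :: "'a::ring_1 vec \<Rightarrow> 'a \<Rightarrow> 'a vec" where
  "rsmult v c = map_vec (\<lambda>x. x * c) v"

definition psub :: "'a::ring_1 pobj \<Rightarrow> 'a vec set \<Rightarrow> bool" where
  "psub X U \<longleftrightarrow> U \<subseteq> pmod X \<and> 0\<^sub>v (fst X) \<in> U \<and> (\<forall>u\<in>U. \<forall>w\<in>U. u + w \<in> U)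
      \<and> (\<forall>u\<in>U. \<forall>c. rsmult u c \<in> U)"

definition pmaxsub :: "'a::ring_1 pobj \<Rightarrow> 'a vec set \<Rightarrow> bool" where
  "pmaxsub X U \<longleftrightarrow> psub X U \<and> U \<noteq> pmod X \<and>
      (\<forall>W. psub X W \<and> U \<subseteq> W \<longrightarrow> W = U \<or> W = pmod X)"

definition prad :: "'a::ring_1 pobj \<Rightarrow> 'a vec set" where
  "prad X = pmod X \<inter> \<Inter> {U. pmaxsub X U}"

definition phom :: "'a::ring_1 pobj \<Rightarrow> 'a pobj \<Rightarrow> 'a mat \<Rightarrow> bool" where
  "phom X Y A \<longleftrightarrow> pobj X \<and> pobj Y \<and> A \<in> carrier_mat (fst Y) (fst X)
      \<and> snd Y * A = A \<and> A * snd X = A"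

text \<open>Radical morphisms (the ideal I): image contained in the radical of the target.\<close>
definition pradhom :: "'a::ring_1 pobj \<Rightarrow> 'a pobj \<Rightarrow> 'a mat \<Rightarrow> bool" where
  "pradhom X Y A \<longleftrightarrow> phom X Y A \<and> (\<forall>v\<in>pmod X. A *\<^sub>v v \<in> prad Y)"

definition psplit_mono :: "'a::ring_1 pobj \<Rightarrow> 'a pobj \<Rightarrow> 'a mat \<Rightarrow> bool" where
  "psplit_mono X Y A \<longleftrightarrow> phom X Y A \<and> (\<exists>B. phom Y X B \<and> B * A = snd X)"

definition psplit_epi :: "'a::ring_1 pobj \<Rightarrow> 'a pobj \<Rightarrow> 'a mat \<Rightarrow> bool" where
  "psplit_epi X Y A \<longleftrightarrow> phom X Y A \<and> (\<exists>B. phom Y X B \<and> A * B = snd Y)"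

definition pirr :: "'a::ring_1 pobj \<Rightarrow> 'a pobj \<Rightarrow> 'a mat \<Rightarrow> bool" where
  "pirr X Y A \<longleftrightarrow> phom X Y A \<and> \<not> psplit_mono X Y A \<and> \<not> psplit_epi X Y A \<and>
     (\<forall>Z g h. phom X Z g \<and> phom Z Y h \<and> A = h * g \<longrightarrow> psplit_mono X Z g \<or> psplit_epi Z Y h)"

text \<open>Lambda non-semisimple: the radical of Lambda_Lambda is nonzero.\<close>
definition fd_nonss_algebra :: "('k::field \<Rightarrow> 'a::ring_1) \<Rightarrow> bool" where
  "fd_nonss_algebra emb \<longleftrightarrow> fd_algebra emb \<and>
     (\<exists>v \<in> prad (1, 1\<^sub>m 1 :: 'a mat). v \<noteq> 0\<^sub>v 1)"

definition interval :: "int set \<Rightarrow> bool" where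
  "interval J \<longleftrightarrow> (\<forall>a b c. a \<in> J \<longrightarrow> c \<in> J \<longrightarrow> a \<le> b \<longrightarrow> b \<le> c \<longrightarrow> b \<in> J)"

type_synonym 'a cplx = "(int \<Rightarrow> 'a pobj) \<times> (int \<Rightarrow> 'a mat)"

definition cplx :: "int set \<Rightarrow> 'a::ring_1 cplx \<Rightarrow> bool" where
  "cplx J C \<longleftrightarrow>
     (\<forall>n. pradhom (fst C n) (fst C (n + 1)) (snd C n))
     \<and> (\<forall>n. snd C (n + 1) * snd C n = 0\<^sub>m (fst (fst C (n + 2))) (fst (fst C n)))
     \<and> (\<forall>n. n \<notin> J \<longrightarrow> pmod (fst C n) = {0\<^sub>v (fst (fst C n))})"

definition cmor :: "int set \<Rightarrow> 'a::ring_1 cplx \<Rightarrow> 'a cplx \<Rightarrow> (int \<Rightarrow> 'a mat) \<Rightarrow> bool" where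
  "cmor J C D f \<longleftrightarrow> cplx J C \<and> cplx J D \<and>
     (\<forall>n. phom (fst C n) (fst D n) (f n)) \<and> (\<forall>n. snd D n * f n = f (n + 1) * snd C n)"

definition ccomp :: "(int \<Rightarrow> 'a::ring_1 mat) \<Rightarrow> (int \<Rightarrow> 'a mat) \<Rightarrow> int \<Rightarrow> 'a mat" where
  "ccomp g f = (\<lambda>n. g n * f n)"

definition cid :: "'a::ring_1 cplx \<Rightarrow> int \<Rightarrow> 'a mat" where
  "cid C = (\<lambda>n. snd (fst C n))"

definition htpc :: "'a::ring_1 cplx \<Rightarrow> 'a cplx \<Rightarrow> (int \<Rightarrow> 'a mat) \<Rightarrow> (int \<Rightarrow> 'a mat) \<Rightarrow> bool" where
  "htpc C D f g \<longleftrightarrow> (\<exists>s. (\<forall>n. phom (fst C n) (fst D (n - 1)) (s n)) \<and>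
      (\<forall>n. f n - g n = snd D (n - 1) * s n + s (n + 1) * snd C n))"

definition kiso :: "int set \<Rightarrow> 'a::ring_1 cplx \<Rightarrow> 'a cplx \<Rightarrow> (int \<Rightarrow> 'a mat) \<Rightarrow> bool" where
  "kiso J C D a \<longleftrightarrow> cmor J C D a \<and> (\<exists>b. cmor J D C b \<and>
      htpc C C (ccomp b a) (cid C) \<and> htpc D D (ccomp a b) (cid D))"

definition csplit_mono :: "int set \<Rightarrow> 'a::ring_1 cplx \<Rightarrow> 'a cplx \<Rightarrow> (int \<Rightarrow> 'a mat) \<Rightarrow> bool" where
  "csplit_mono J C D f \<longleftrightarrow> cmor J C D f \<and> (\<exists>r. cmor J D C r \<and> ccomp r f = cid C)"

definition csplit_epi :: "int set \<Rightarrow> 'a::ring_1 cplx \<Rightarrow> 'a cplx \<Rightarrow> (int \<Rightarrow> 'a mat) \<Rightarrow> bool" where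
  "csplit_epi J C D f \<longleftrightarrow> cmor J C D f \<and> (\<exists>r. cmor J D C r \<and> ccomp f r = cid D)"

definition cirr :: "int set \<Rightarrow> 'a::ring_1 cplx \<Rightarrow> 'a cplx \<Rightarrow> (int \<Rightarrow> 'a mat) \<Rightarrow> bool" where
  "cirr J C D f \<longleftrightarrow> cmor J C D f \<and> \<not> csplit_mono J C D f \<and> \<not> csplit_epi J C D f \<and>
     (\<forall>E g h. cmor J C E g \<and> cmor J E D h \<and> f = ccomp h g \<longrightarrow>
        csplit_mono J C E g \<or> csplit_epi J E D h)"

definition smonic :: "'a::ring_1 cplx \<Rightarrow> 'a cplx \<Rightarrow> (int \<Rightarrow> 'a mat) \<Rightarrow> bool" where
  "smonic C D f \<longleftrightarrow> (\<forall>n. psplit_mono (fst C n) (fst D n) (f n))"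

definition sepic :: "'a::ring_1 cplx \<Rightarrow> 'a cplx \<Rightarrow> (int \<Rightarrow> 'a mat) \<Rightarrow> bool" where
  "sepic C D f \<longleftrightarrow> (\<forall>n. psplit_epi (fst C n) (fst D n) (f n))"

definition sirreducible :: "'a::ring_1 cplx \<Rightarrow> 'a cplx \<Rightarrow> (int \<Rightarrow> 'a mat) \<Rightarrow> bool" where
  "sirreducible C D f \<longleftrightarrow> (\<exists>i0. pirr (fst C i0) (fst D i0) (f i0)
      \<and> (\<forall>n. pirr (fst C n) (fst D n) (f n) \<longrightarrow> n = i0)
      \<and> (\<forall>n<i0. psplit_epi (fst C n) (fst D n) (f n))
      \<and> (\<forall>n>i0. psplit_mono (fst C n) (fst D n) (f n)))"

end

theory Submission
  imports Defs
begin

text \<open>A homotopy s turns [g] \<alpha> = \<beta> [f] into the degreewise equations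
  g^n \<alpha>^n = \<beta>^n f^n + (d s + s d)^n, whose error terms are radical because the differentials
  are. For the same reason a homotopy equivalence is in each degree invertible modulo a radical
  endomorphism, hence invertible, since e + R is a unit of End(e \<Lambda>^n) for radical R by
  Nakayama's lemma. Being a split mono or a split epi is invariant under composition with
  isomorphisms and under radical perturbation; this gives (a) and (b) degreewise and moves the
  pattern of a sirreducible f over to g. The remaining component g^i0 is irreducible in P(\<Lambda>)
  because g is irreducible as a chain map: a factorisation of g^i0 through Z can be spliced
  into a complex through which g factors.\<close>

section \<open>Modules and morphisms\<close>

lemma pobjD:
  assumes "pobj X"
  shows "snd X \<in> carrier_mat (fst X) (fst X)" "snd X * snd X = snd X"
  using assms by (auto simp: pobj_def)

lemma phomD:
  assumes "phom X Y A"
  shows "A \<in> carrier_mat (fst Y) (fst X)" "snd Y * A = A" "A * snd X = A"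
    "snd X \<in> carrier_mat (fst X) (fst X)" "snd Y \<in> carrier_mat (fst Y) (fst Y)"
    "pobj X" "pobj Y"
  using assms by (auto simp: phom_def pobj_def)

lemma pmod_carrier: "v \<in> pmod X \<Longrightarrow> v \<in> carrier_vec (fst X)"
  by (simp add: pmod_def)

lemma phom_id: "pobj X \<Longrightarrow> phom X X (snd X)"
  by (auto simp: phom_def pobj_def)

lemma phom_comp:
  assumes "phom X Y A" "phom Y Z B"
  shows "phom X Z (B * A)"
proof -
  note c = phomD[OF assms(1)] phomD[OF assms(2)]
  have "snd Z * (B * A) = (snd Z * B) * A"
    using c by (simp add: assoc_mult_mat[of _ "fst Z" "fst Z", symmetric])
  moreover have "(B * A) * snd X = B * (A * snd X)"
    using c by (simp add: assoc_mult_mat[of _ "fst Z" "fst Y"])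
  ultimately show ?thesis using c by (auto simp: phom_def)
qed

lemma phom_add:
  assumes "phom X Y A" "phom X Y B"
  shows "phom X Y (A + B)"
proof -
  note c = phomD[OF assms(1)] phomD[OF assms(2)]
  have "snd Y * (A + B) = snd Y * A + snd Y * B" "(A + B) * snd X = A * snd X + B * snd X"
    using c by (auto simp: mult_add_distrib_mat add_mult_distrib_mat)
  then show ?thesis using c by (auto simp: phom_def)
qed

lemma phom_uminus: "phom X Y A \<Longrightarrow> phom X Y (- A)"
  by (auto simp: phom_def pobj_def)

lemma phom_mult_assoc:
  assumes "phom X Y A" "phom Y Z B" "phom Z W C"
  shows "C * (B * A) = (C * B) * A"
  using assoc_mult_mat[OF phomD(1)[OF assms(3)] phomD(1)[OF assms(2)] phomD(1)[OF assms(1)]]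
  by simp

lemma rsmult_carrier [simp]: "v \<in> carrier_vec n \<Longrightarrow> rsmult v c \<in> carrier_vec n"
  by (simp add: rsmult_def)

lemma mult_mat_vec_rsmult:
  assumes "A \<in> carrier_mat m n" "v \<in> carrier_vec n"
  shows "A *\<^sub>v rsmult v c = rsmult (A *\<^sub>v v) c"
  using assms
  by (intro eq_vecI) (auto simp: rsmult_def scalar_prod_def sum_distrib_right mult.assoc)

lemma rsmult_add:
  assumes "v \<in> carrier_vec n" "w \<in> carrier_vec n"
  shows "rsmult (v + w) c = rsmult v c + rsmult w c"
  using assms by (intro eq_vecI) (auto simp: rsmult_def distrib_right)

lemma uminus_eq_rsmult: "- v = rsmult v (-1)"
  by (intro eq_vecI) (auto simp: rsmult_def)

lemma mult_mat_vec_zero: "A \<in> carrier_mat m n \<Longrightarrow> A *\<^sub>v 0\<^sub>v n = 0\<^sub>v m"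
  by (intro eq_vecI) auto

lemma pmod_zero: "pobj X \<Longrightarrow> 0\<^sub>v (fst X) \<in> pmod X"
  using mult_mat_vec_zero[OF pobjD(1)] by (simp add: pmod_def)

lemma pmod_add:
  assumes "pobj X" "v \<in> pmod X" "w \<in> pmod X"
  shows "v + w \<in> pmod X"
  using assms mult_add_distrib_mat_vec[of "snd X" "fst X" "fst X" v w]
  by (auto simp: pmod_def pobj_def)

lemma pmod_rsmult:
  assumes "pobj X" "v \<in> pmod X"
  shows "rsmult v c \<in> pmod X"
  using assms mult_mat_vec_rsmult[of "snd X" "fst X" "fst X" v c]
  by (auto simp: pmod_def pobj_def)

lemma phom_pmod:
  assumes "phom X Y A" "v \<in> pmod X"
  shows "A *\<^sub>v v \<in> pmod Y"
proof -
  note c = phomD[OF assms(1)]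
  have "snd Y *\<^sub>v (A *\<^sub>v v) = (snd Y * A) *\<^sub>v v"
    using c(1,5) assms(2) by (simp add: pmod_def)
  also have "\<dots> = A *\<^sub>v v" using c(2) by simp
  finally show ?thesis using c(1) pmod_carrier[OF assms(2)] by (simp add: pmod_def)
qed

lemma phom_mult_vec:
  assumes "phom X Y A" "phom Y Z B" "v \<in> pmod X"
  shows "(B * A) *\<^sub>v v = B *\<^sub>v (A *\<^sub>v v)"
  using phomD(1)[OF assms(1)] phomD(1)[OF assms(2)] pmod_carrier[OF assms(3)] by simp

section \<open>Submodules and the radical\<close>

lemma psub_uminus: "psub X U \<Longrightarrow> u \<in> U \<Longrightarrow> - u \<in> U"
  by (simp add: psub_def uminus_eq_rsmult)

lemma psub_diff:
  assumes "psub X U" "u \<in> U" "w \<in> U"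
  shows "u - w \<in> U"
proof -
  have "u - w = u + - w"
    using assms by (intro minus_add_uminus_vec) (auto simp: psub_def pmod_def)
  then show ?thesis using assms psub_uminus[OF assms(1,3)] by (auto simp: psub_def)
qed

lemma psub_pmod: "pobj X \<Longrightarrow> psub X (pmod X)"
  by (auto simp: psub_def pmod_zero pmod_add pmod_rsmult)

lemma psub_preimage:
  assumes A: "phom X Y A" and U: "psub Y U"
  shows "psub X {w \<in> pmod X. A *\<^sub>v w \<in> U}"
proof -
  note c = phomD[OF A]
  have "A *\<^sub>v (u + w) = A *\<^sub>v u + A *\<^sub>v w" "A *\<^sub>v rsmult u a = rsmult (A *\<^sub>v u) a"
    if "u \<in> pmod X" "w \<in> pmod X" for u w a
    using that c by (auto simp: pmod_def mult_add_distrib_mat_vec mult_mat_vec_rsmult)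
  moreover have "A *\<^sub>v 0\<^sub>v (fst X) = 0\<^sub>v (fst Y)"
    using mult_mat_vec_zero[OF c(1)] .
  ultimately show ?thesis
    using U c(6) by (auto simp: psub_def pmod_zero pmod_add pmod_rsmult)
qed

lemma psub_image:
  assumes A: "phom X Y A" and W: "psub X W"
  shows "psub Y ((*\<^sub>v) A ` W)"
  unfolding psub_def
proof (intro conjI ballI allI subsetI)
  note c = phomD[OF A]
  have WX: "W \<subseteq> pmod X" using W by (simp add: psub_def)
  then have carrier: "w \<in> carrier_vec (fst X)" if "w \<in> W" for w
    using that pmod_carrier by blast
  {
    fix v assume "v \<in> (*\<^sub>v) A ` W"
    then show "v \<in> pmod Y" using WX phom_pmod[OF A] by blast
  next
    have "0\<^sub>v (fst Y) = A *\<^sub>v 0\<^sub>v (fst X)" using mult_mat_vec_zero[OF c(1)] by simp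
    moreover have "0\<^sub>v (fst X) \<in> W" using W by (simp add: psub_def)
    ultimately show "0\<^sub>v (fst Y) \<in> (*\<^sub>v) A ` W" by (rule image_eqI)
  next
    fix v v' assume "v \<in> (*\<^sub>v) A ` W" "v' \<in> (*\<^sub>v) A ` W"
    then obtain w w' where ww': "v = A *\<^sub>v w" "v' = A *\<^sub>v w'" "w \<in> W" "w' \<in> W" by blast
    then have "v + v' = A *\<^sub>v (w + w')"
      using carrier by (simp add: mult_add_distrib_mat_vec[OF c(1)])
    moreover have "w + w' \<in> W" using ww' W by (simp add: psub_def)
    ultimately show "v + v' \<in> (*\<^sub>v) A ` W" by (rule image_eqI)
  next
    fix v a assume "v \<in> (*\<^sub>v) A ` W"
    then obtain w where w: "v = A *\<^sub>v w" "w \<in> W" by blast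
    then have "rsmult v a = A *\<^sub>v rsmult w a"
      using carrier by (simp add: mult_mat_vec_rsmult[OF c(1)])
    moreover have "rsmult w a \<in> W" using w W by (simp add: psub_def)
    ultimately show "rsmult v a \<in> (*\<^sub>v) A ` W" by (rule image_eqI)
  }
qed

lemma psub_sum:
  fixes X :: "'a::ring_1 pobj"
  assumes X: "pobj X" and U: "psub X U" and V: "psub X V"
  shows "psub X {u + v |u v. u \<in> U \<and> v \<in> V}"
  unfolding psub_def
proof (intro conjI ballI allI subsetI)
  have UX: "U \<subseteq> pmod X" and VX: "V \<subseteq> pmod X" using U V by (auto simp: psub_def)
  then have carrier: "x \<in> carrier_vec (fst X)" if "x \<in> U \<union> V" for x
    using that pmod_carrier by blast
  {
    fix s assume "s \<in> {u + v |u v. u \<in> U \<and> v \<in> V}"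
    then show "s \<in> pmod X" using UX VX pmod_add[OF X] by blast
  next
    have "0\<^sub>v (fst X) = 0\<^sub>v (fst X) + (0\<^sub>v (fst X) :: 'a vec)" by simp
    then show "0\<^sub>v (fst X) \<in> {u + v |u v. u \<in> U \<and> v \<in> V}" using U V unfolding psub_def by blast
  next
    fix s t assume "s \<in> {u + v |u v. u \<in> U \<and> v \<in> V}" "t \<in> {u + v |u v. u \<in> U \<and> v \<in> V}"
    then obtain u1 v1 u2 v2 where st: "s = u1 + v1" "t = u2 + v2" "u1 \<in> U" "v1 \<in> V" "u2 \<in> U" "v2 \<in> V"
      by blast
    then have "s + t = (u1 + u2) + (v1 + v2)"
      using carrier[of u1] carrier[of u2] carrier[of v1] carrier[of v2] by (auto intro!: eq_vecI)
    moreover have "u1 + u2 \<in> U" "v1 + v2 \<in> V" using st U V by (auto simp: psub_def)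
    ultimately show "s + t \<in> {u + v |u v. u \<in> U \<and> v \<in> V}" by blast
  next
    fix s c assume "s \<in> {u + v |u v. u \<in> U \<and> v \<in> V}"
    then obtain u v where uv: "s = u + v" "u \<in> U" "v \<in> V" by blast
    then have "rsmult s c = rsmult u c + rsmult v c"
      using carrier[of u] carrier[of v] by (simp add: rsmult_add)
    moreover have "rsmult u c \<in> U" "rsmult v c \<in> V" using uv U V by (auto simp: psub_def)
    ultimately show "rsmult s c \<in> {u + v |u v. u \<in> U \<and> v \<in> V}" by blast
  }
qed

lemma psub_eq_pmod_of_image_sum:
  assumes A: "phom X Y A" and W: "psub X W" and U: "psub Y U"
    and preimage: "{w \<in> pmod X. A *\<^sub>v w \<in> U} \<subseteq> W"
    and sum: "{u' + u |u' u. u' \<in> (*\<^sub>v) A ` W \<and> u \<in> U} = pmod Y"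
  shows "W = pmod X"
proof -
  note c = phomD[OF A]
  have UY: "U \<subseteq> pmod Y" and WX: "W \<subseteq> pmod X" using U W by (auto simp: psub_def)
  have "x \<in> W" if x: "x \<in> pmod X" for x
  proof -
    obtain w u where wu: "A *\<^sub>v x = A *\<^sub>v w + u" "w \<in> W" "u \<in> U"
      using phom_pmod[OF A x] sum by blast
    have cx: "x \<in> carrier_vec (fst X)" "w \<in> carrier_vec (fst X)" "u \<in> carrier_vec (fst Y)"
      using x wu(2,3) WX UY pmod_carrier by blast+
    have "A *\<^sub>v (x - w) = A *\<^sub>v x - A *\<^sub>v w"
      using c(1) cx(1,2) by (rule mult_minus_distrib_mat_vec)
    also have "\<dots> = u" unfolding wu(1) using cx c(1) by (intro eq_vecI) auto
    finally have "A *\<^sub>v (x - w) \<in> U" using wu(3) by simp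
    moreover have "x - w \<in> pmod X"
      using psub_diff[OF psub_pmod[OF c(6)] x] wu(2) WX by blast
    ultimately have "x - w \<in> W" using preimage by blast
    then have "(x - w) + w \<in> W" using W wu(2) unfolding psub_def by blast
    moreover have "(x - w) + w = x" using cx by (intro eq_vecI) auto
    ultimately show ?thesis by simp
  qed
  then show ?thesis using WX by blast
qed

lemma pmaxsub_preimage:
  assumes A: "phom X Y A" and U: "pmaxsub Y U"
    and proper: "{w \<in> pmod X. A *\<^sub>v w \<in> U} \<noteq> pmod X"
  shows "pmaxsub X {w \<in> pmod X. A *\<^sub>v w \<in> U}" (is "pmaxsub X ?P")
  unfolding pmaxsub_def
proof (intro conjI allI impI proper)
  note c = phomD[OF A]
  have sU: "psub Y U" using U by (simp add: pmaxsub_def)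
  show "psub X ?P" using psub_preimage[OF A sU] .
  fix W assume W: "psub X W \<and> ?P \<subseteq> W"
  have "W = pmod X" if "W \<noteq> ?P"
  proof -
    obtain w0 where w0: "w0 \<in> W" "w0 \<notin> ?P" using W \<open>W \<noteq> ?P\<close> by blast
    let ?W' = "{u' + u |u' u. u' \<in> (*\<^sub>v) A ` W \<and> u \<in> U}"
    have UY: "U \<subseteq> pmod Y" and WX: "W \<subseteq> pmod X" using sU W by (auto simp: psub_def)
    have "u \<in> ?W'" if u: "u \<in> U" for u
    proof -
      have "A *\<^sub>v 0\<^sub>v (fst X) \<in> (*\<^sub>v) A ` W" using W by (simp add: psub_def)
      moreover have "u = A *\<^sub>v 0\<^sub>v (fst X) + u"
        using u UY pmod_carrier mult_mat_vec_zero[OF c(1)] by fastforce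
      ultimately show "u \<in> ?W'" using u by blast
    qed
    moreover have "A *\<^sub>v w0 \<in> ?W' - U"
    proof -
      have "0\<^sub>v (fst Y) \<in> U" using sU by (simp add: psub_def)
      moreover have "A *\<^sub>v w0 = A *\<^sub>v w0 + 0\<^sub>v (fst Y)"
        using w0 WX c(1) pmod_carrier by fastforce
      ultimately show ?thesis using w0 WX by blast
    qed
    moreover have "psub Y ?W'" using psub_sum[OF c(7) psub_image[OF A] sU] W by blast
    ultimately have "?W' = pmod Y" using U unfolding pmaxsub_def by blast
    then show ?thesis using psub_eq_pmod_of_image_sum[OF A _ sU] W by blast
  qed
  then show "W = ?P \<or> W = pmod X" by blast
qed

lemma phom_prad:
  assumes A: "phom X Y A" and v: "v \<in> prad X"
  shows "A *\<^sub>v v \<in> prad Y"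
proof -
  have vX: "v \<in> pmod X" using v by (simp add: prad_def)
  have "A *\<^sub>v v \<in> U" if U: "pmaxsub Y U" for U
  proof (cases "{w \<in> pmod X. A *\<^sub>v w \<in> U} = pmod X")
    case False
    then show ?thesis using pmaxsub_preimage[OF A U False] v unfolding prad_def by blast
  qed (use vX in blast)
  then show ?thesis using phom_pmod[OF A vX] by (auto simp: prad_def)
qed

lemma pradhom_phom: "pradhom X Y A \<Longrightarrow> phom X Y A"
  by (simp add: pradhom_def)

lemma pradhom_mult_phom:
  assumes D: "pradhom Y Z D" and S: "phom X Y S"
  shows "pradhom X Z (D * S)"
  unfolding pradhom_def
proof (intro conjI ballI)
  show "phom X Z (D * S)" using phom_comp[OF S pradhom_phom[OF D]] .
  fix v assume v: "v \<in> pmod X"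
  then show "(D * S) *\<^sub>v v \<in> prad Z"
    using D phom_pmod[OF S v] phom_mult_vec[OF S pradhom_phom[OF D] v]
    by (simp add: pradhom_def)
qed

lemma phom_mult_pradhom:
  assumes D: "pradhom X Y D" and S: "phom Y Z S"
  shows "pradhom X Z (S * D)"
  unfolding pradhom_def
proof (intro conjI ballI)
  show "phom X Z (S * D)" using phom_comp[OF pradhom_phom[OF D] S] .
  fix v assume v: "v \<in> pmod X"
  then show "(S * D) *\<^sub>v v \<in> prad Z"
    using D phom_prad[OF S] phom_mult_vec[OF pradhom_phom[OF D] S v]
    by (simp add: pradhom_def)
qed

lemma pradhom_add:
  assumes A: "pradhom X Y A" and B: "pradhom X Y B"
  shows "pradhom X Y (A + B)"
  unfolding pradhom_def
proof (intro conjI ballI)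
  note c = phomD[OF pradhom_phom[OF A]] phomD[OF pradhom_phom[OF B]]
  show "phom X Y (A + B)" using phom_add[OF pradhom_phom[OF A] pradhom_phom[OF B]] .
  fix v assume v: "v \<in> pmod X"
  have "(A + B) *\<^sub>v v = A *\<^sub>v v + B *\<^sub>v v"
    using c pmod_carrier[OF v] by (simp add: add_mult_distrib_mat_vec)
  moreover have "A *\<^sub>v v \<in> prad Y" "B *\<^sub>v v \<in> prad Y" using A B v by (auto simp: pradhom_def)
  ultimately show "(A + B) *\<^sub>v v \<in> prad Y"
    using c(7) by (auto simp: prad_def pmaxsub_def psub_def pmod_add)
qed

lemma pradhom_uminus:
  assumes A: "pradhom X Y A"
  shows "pradhom X Y (- A)"
  unfolding pradhom_def
proof (intro conjI ballI)
  note c = phomD[OF pradhom_phom[OF A]]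
  show "phom X Y (- A)" using phom_uminus[OF pradhom_phom[OF A]] .
  fix v assume v: "v \<in> pmod X"
  have "(- A) *\<^sub>v v = rsmult (A *\<^sub>v v) (- 1)"
    using c pmod_carrier[OF v] by (simp add: uminus_eq_rsmult)
  moreover have "A *\<^sub>v v \<in> prad Y" using A v by (simp add: pradhom_def)
  ultimately show "(- A) *\<^sub>v v \<in> prad Y"
    using c(7) by (auto simp: prad_def pmaxsub_def psub_def pmod_rsmult)
qed

section \<open>Nakayama's lemma\<close>

lemma col_pmod:
  assumes X: "pobj X" and j: "j < fst X"
  shows "col (snd X) j \<in> pmod X"
proof -
  note e = pobjD[OF X]
  have "snd X *\<^sub>v col (snd X) j = col (snd X * snd X) j" using e(1) j by (intro eq_vecI) auto
  then show ?thesis using e j by (simp add: pmod_def)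
qed

lemma pmod_subset_psub_of_cols:
  assumes X: "pobj X" and W: "psub X W" and cols: "\<forall>j<fst X. col (snd X) j \<in> W"
  shows "pmod X \<subseteq> W"
proof
  fix v assume v: "v \<in> pmod X"
  let ?n = "fst X" and ?e = "snd X"
  have e: "?e \<in> carrier_mat ?n ?n" using pobjD[OF X] by simp
  define partial where "partial k = vec ?n (\<lambda>i. \<Sum>j<k. ?e $$ (i, j) * v $ j)" for k
  have "partial k \<in> W" if "k \<le> ?n" for k
    using that
  proof (induction k)
    case 0
    have "partial 0 = 0\<^sub>v ?n" by (auto simp: partial_def)
    then show ?case using W by (simp add: psub_def)
  next
    case (Suc k)
    have "partial (Suc k) = partial k + rsmult (col ?e k) (v $ k)"
      using Suc.prems e by (intro eq_vecI) (auto simp: partial_def rsmult_def)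
    moreover have "rsmult (col ?e k) (v $ k) \<in> W" using cols Suc.prems W by (auto simp: psub_def)
    ultimately show ?case using Suc W by (auto simp: psub_def)
  qed
  then have "partial ?n \<in> W" by simp
  moreover have "partial ?n = ?e *\<^sub>v v"
    using e pmod_carrier[OF v]
    by (intro eq_vecI) (auto simp: partial_def scalar_prod_def lessThan_atLeast0 intro!: sum.cong)
  ultimately show "v \<in> W" using v by (simp add: pmod_def)
qed

lemma psub_Union_chain:
  assumes ne: "C \<noteq> {}" and chain: "chain\<^sub>\<subseteq> C" and sub: "\<forall>W\<in>C. psub X W"
  shows "psub X (\<Union>C)"
  unfolding psub_def
proof (intro conjI ballI allI)
  show "\<Union>C \<subseteq> pmod X" "0\<^sub>v (fst X) \<in> \<Union>C"
    using ne sub by (auto simp: psub_def)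
next
  fix u w assume "u \<in> \<Union>C" "w \<in> \<Union>C"
  then obtain A B where AB: "A \<in> C" "B \<in> C" "u \<in> A" "w \<in> B" by auto
  from chain AB have "A \<subseteq> B \<or> B \<subseteq> A" by (auto simp: chain_subset_def)
  then obtain D where D: "D \<in> C" "u \<in> D" "w \<in> D" using AB by blast
  then have "u + w \<in> D" using sub by (auto simp: psub_def)
  then show "u + w \<in> \<Union>C" using D by blast
next
  fix u c assume "u \<in> \<Union>C"
  then obtain A where A: "A \<in> C" "u \<in> A" by auto
  then have "rsmult u c \<in> A" using sub by (auto simp: psub_def)
  then show "rsmult u c \<in> \<Union>C" using A by blast
qed

text \<open>The union of a chain of proper submodules is proper: otherwise one member would
  contain the finitely many generating columns of e.\<close>
lemma pmaxsub_exists: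
  assumes X: "pobj X" and N: "psub X N" and proper: "N \<noteq> pmod X"
  shows "\<exists>U. pmaxsub X U \<and> N \<subseteq> U"
proof -
  define F where "F = {W. psub X W \<and> N \<subseteq> W \<and> W \<noteq> pmod X}"
  have "\<exists>U\<in>F. \<forall>W\<in>C. W \<subseteq> U" if C: "C \<in> chains F" for C
  proof (cases "C = {}")
    case True
    then show ?thesis using N proper by (auto simp: F_def)
  next
    case False
    have CF: "C \<subseteq> F" and chain: "chain\<^sub>\<subseteq> C" using C by (auto simp: chains_def)
    have "\<Union>C \<noteq> pmod X"
    proof
      assume eq: "\<Union>C = pmod X"
      let ?G = "{col (snd X) j |j. j < fst X}"
      have "finite ?G" by simp
      moreover have "?G \<subseteq> \<Union>C" using eq col_pmod[OF X] by auto
      moreover have "subset.chain F C" using C by (simp add: chains_alt_def)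
      ultimately obtain B where B: "B \<in> C" "?G \<subseteq> B"
        using finite_subset_Union_chain[OF _ _ False] by blast
      then have "psub X B" "B \<noteq> pmod X" using CF by (auto simp: F_def)
      moreover have "pmod X \<subseteq> B" using pmod_subset_psub_of_cols[OF X \<open>psub X B\<close>] B by auto
      ultimately show False by (auto simp: psub_def)
    qed
    moreover have "psub X (\<Union>C)"
      using CF by (intro psub_Union_chain[OF False chain]) (auto simp: F_def)
    moreover have "N \<subseteq> \<Union>C" using CF False by (auto simp: F_def)
    ultimately show ?thesis by (auto simp: F_def)
  qed
  then have "\<forall>C\<in>chains F. \<exists>U\<in>F. \<forall>W\<in>C. W \<subseteq> U" by blast
  from Zorn_Lemma2[OF this] obtain M where M: "M \<in> F" "\<forall>W\<in>F. M \<subseteq> W \<longrightarrow> W = M"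
    by blast
  then have "pmaxsub X M" by (auto simp: pmaxsub_def F_def)
  then show ?thesis using M by (auto simp: F_def)
qed

lemma id_plus_pradhom_surj:
  assumes R: "pradhom X X R" and m: "m \<in> pmod X"
  shows "\<exists>x\<in>pmod X. (snd X + R) *\<^sub>v x = m"
proof -
  note c = phomD[OF pradhom_phom[OF R]]
  let ?u = "snd X + R"
  have u: "phom X X ?u" using phom_add[OF phom_id[OF c(6)] pradhom_phom[OF R]] .
  let ?N = "(*\<^sub>v) ?u ` pmod X"
  have "?N = pmod X"
  proof (rule ccontr)
    assume "?N \<noteq> pmod X"
    then obtain U where U: "pmaxsub X U" "?N \<subseteq> U"
      using pmaxsub_exists[OF c(6) psub_image[OF u psub_pmod[OF c(6)]]] by blast
    have sU: "psub X U" using U by (simp add: pmaxsub_def)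
    have "y \<in> U" if y: "y \<in> pmod X" for y
    proof -
      have "?u *\<^sub>v y - R *\<^sub>v y \<in> U"
        using psub_diff[OF sU] U y R by (auto simp: pradhom_def prad_def)
      moreover have "?u *\<^sub>v y - R *\<^sub>v y = y"
        using c(1,4) y by (auto simp: pmod_def add_mult_distrib_mat_vec intro!: eq_vecI)
      ultimately show ?thesis by simp
    qed
    then show False using U by (auto simp: pmaxsub_def psub_def)
  qed
  then have "m \<in> ?N" using m by simp
  then show ?thesis by blast
qed

lemma id_plus_pradhom_right_inverse:
  assumes R: "pradhom X X R"
  shows "\<exists>z. phom X X z \<and> (snd X + R) * z = snd X"
proof -
  note c = phomD[OF pradhom_phom[OF R]]
  let ?n = "fst X" and ?e = "snd X"
  let ?u = "?e + R"
  have e: "?e \<in> carrier_mat ?n ?n" "?e * ?e = ?e" using pobjD[OF c(6)] by auto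
  have "\<forall>j. \<exists>x. j < ?n \<longrightarrow> x \<in> pmod X \<and> ?u *\<^sub>v x = col ?e j"
    using id_plus_pradhom_surj[OF R col_pmod[OF c(6)]] by blast
  then obtain xs where xs: "\<And>j. j < ?n \<Longrightarrow> xs j \<in> pmod X \<and> ?u *\<^sub>v xs j = col ?e j"
    by metis
  define V where "V = mat ?n ?n (\<lambda>(i, j). xs j $ i)"
  have V: "V \<in> carrier_mat ?n ?n" by (simp add: V_def)
  have col_V: "col V j = xs j" if "j < ?n" for j
    using xs[OF that] that by (intro eq_vecI) (auto simp: V_def pmod_def)
  have uV: "?u * V = ?e"
  proof (rule eq_matI)
    fix i j assume i: "i < dim_row ?e" and j: "j < dim_col ?e"
    have "(?u * V) $$ (i, j) = (?u *\<^sub>v col V j) $ i" using i j e c(1) V by simp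
    also have "\<dots> = ?e $$ (i, j)" using xs[of j] col_V[of j] i j e by simp
    finally show "(?u * V) $$ (i, j) = ?e $$ (i, j)" .
  qed (use e c(1) V in auto)
  have eV: "?e * V = V"
  proof (rule eq_matI)
    fix i j assume i: "i < dim_row V" and j: "j < dim_col V"
    have "(?e * V) $$ (i, j) = (?e *\<^sub>v col V j) $ i" using i j e V by simp
    also have "\<dots> = V $$ (i, j)" using xs[of j] col_V[of j] i j V by (simp add: pmod_def V_def)
    finally show "(?e * V) $$ (i, j) = V $$ (i, j)" .
  qed (use e V in auto)
  have "phom X X (V * ?e)"
    using c(6) e V eV by (auto simp: phom_def assoc_mult_mat[of _ ?n ?n _ ?n _ ?n, symmetric])
  moreover have "?u * (V * ?e) = ?e"
    using e c(1) V uV by (simp add: assoc_mult_mat[of _ ?n ?n _ ?n _ ?n, symmetric])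
  ultimately show ?thesis by blast
qed

text \<open>A right inverse z of e + R is itself of the form e - R z, so it has a right
  inverse as well; hence it is a two-sided inverse.\<close>
lemma id_plus_pradhom_invertible:
  assumes R: "pradhom X X R"
  obtains z where "phom X X z" "z * (snd X + R) = snd X" "(snd X + R) * z = snd X"
proof -
  note c = phomD[OF pradhom_phom[OF R]]
  let ?n = "fst X" and ?e = "snd X"
  obtain z where z: "phom X X z" "(?e + R) * z = ?e"
    using id_plus_pradhom_right_inverse[OF R] by blast
  note cz = phomD[OF z(1)]
  obtain w where w: "phom X X w" "(?e + - (R * z)) * w = ?e"
    using id_plus_pradhom_right_inverse[OF pradhom_uminus[OF pradhom_mult_phom[OF R z(1)]]]
    by blast
  note cw = phomD[OF w(1)]
  have "z + R * z = ?e" using z cz c by (simp add: add_mult_distrib_mat)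
  then have "?e + - (R * z) = (z + R * z) + - (R * z)" by simp
  also have "\<dots> = z" using cz c by (intro eq_matI) auto
  finally have zw: "z * w = ?e" using w by simp
  have "?e + R = (?e + R) * ?e"
    using c pobjD(2)[OF c(6)] by (simp add: add_mult_distrib_mat)
  also have "\<dots> = ((?e + R) * z) * w"
    using zw c cz cw by (simp add: assoc_mult_mat[of _ ?n ?n _ ?n _ ?n])
  also have "\<dots> = w" using z cw by simp
  finally show ?thesis using that z zw by simp
qed

section \<open>Split monomorphisms and split epimorphisms\<close>

lemma psplit_mono_comp:
  assumes "psplit_mono X Y A" "psplit_mono Y Z B"
  shows "psplit_mono X Z (B * A)"
proof -
  obtain p where p: "phom Y X p" "p * A = snd X" using assms(1) by (auto simp: psplit_mono_def)
  obtain q where q: "phom Z Y q" "q * B = snd Y" using assms(2) by (auto simp: psplit_mono_def)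
  have A: "phom X Y A" and B: "phom Y Z B" using assms by (auto simp: psplit_mono_def)
  have "(p * q) * (B * A) = p * ((q * B) * A)"
    using phom_mult_assoc[OF phom_comp[OF A B] q(1) p(1)] phom_mult_assoc[OF A B q(1)] by simp
  also have "\<dots> = snd X" using q p phomD(2)[OF A] by simp
  finally show ?thesis using phom_comp[OF A B] phom_comp[OF q(1) p(1)]
    by (auto simp: psplit_mono_def)
qed

lemma psplit_epi_comp:
  assumes "psplit_epi X Y A" "psplit_epi Y Z B"
  shows "psplit_epi X Z (B * A)"
proof -
  obtain p where p: "phom Y X p" "A * p = snd Y" using assms(1) by (auto simp: psplit_epi_def)
  obtain q where q: "phom Z Y q" "B * q = snd Z" using assms(2) by (auto simp: psplit_epi_def)
  have A: "phom X Y A" and B: "phom Y Z B" using assms by (auto simp: psplit_epi_def)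
  have "(B * A) * (p * q) = B * ((A * p) * q)"
    using phom_mult_assoc[OF phom_comp[OF q(1) p(1)] A B] phom_mult_assoc[OF q(1) p(1) A] by simp
  also have "\<dots> = snd Z" using q p phomD(2)[OF q(1)] by simp
  finally show ?thesis using phom_comp[OF A B] phom_comp[OF q(1) p(1)]
    by (auto simp: psplit_epi_def)
qed

text \<open>If p A = e then p (A + R) = e + p R is invertible.\<close>
lemma psplit_mono_add_pradhom:
  assumes "psplit_mono X Y A" "pradhom X Y R"
  shows "psplit_mono X Y (A + R)"
proof -
  obtain p where p: "phom Y X p" "p * A = snd X" using assms(1) by (auto simp: psplit_mono_def)
  have A: "phom X Y A" using assms(1) by (simp add: psplit_mono_def)
  have R: "phom X Y R" using pradhom_phom[OF assms(2)] .
  obtain t where t: "phom X X t" "t * (snd X + p * R) = snd X"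
    using id_plus_pradhom_invertible[OF phom_mult_pradhom[OF assms(2) p(1)]] by metis
  have "(t * p) * (A + R) = t * (p * A + p * R)"
    using phom_mult_assoc[OF phom_add[OF A R] p(1) t(1)] phomD(1)[OF A] phomD(1)[OF R]
      phomD(1)[OF p(1)] by (simp add: mult_add_distrib_mat)
  also have "\<dots> = snd X" using p t by simp
  finally show ?thesis using phom_add[OF A R] phom_comp[OF p(1) t(1)]
    by (auto simp: psplit_mono_def)
qed

lemma psplit_epi_add_pradhom:
  assumes "psplit_epi X Y A" "pradhom X Y R"
  shows "psplit_epi X Y (A + R)"
proof -
  obtain p where p: "phom Y X p" "A * p = snd Y" using assms(1) by (auto simp: psplit_epi_def)
  have A: "phom X Y A" using assms(1) by (simp add: psplit_epi_def)
  have R: "phom X Y R" using pradhom_phom[OF assms(2)] .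
  obtain t where t: "phom Y Y t" "(snd Y + R * p) * t = snd Y"
    using id_plus_pradhom_invertible[OF pradhom_mult_phom[OF assms(2) p(1)]] by metis
  have "(A + R) * (p * t) = (A * p + R * p) * t"
    using phom_mult_assoc[OF t(1) p(1) phom_add[OF A R]] phomD(1)[OF A] phomD(1)[OF R]
      phomD(1)[OF p(1)] by (simp add: add_mult_distrib_mat)
  also have "\<dots> = snd Y" using p t by simp
  finally show ?thesis using phom_add[OF A R] phom_comp[OF t(1) p(1)]
    by (auto simp: psplit_epi_def)
qed

lemma psplit_mono_compD:
  assumes "psplit_mono X Z (B * A)" "phom X Y A" "phom Y Z B"
  shows "psplit_mono X Y A"
proof -
  obtain L where L: "phom Z X L" "L * (B * A) = snd X" using assms(1) by (auto simp: psplit_mono_def)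
  then have "(L * B) * A = snd X" using phom_mult_assoc[OF assms(2,3) L(1)] by simp
  then show ?thesis using assms(2) phom_comp[OF assms(3) L(1)] by (auto simp: psplit_mono_def)
qed

lemma psplit_epi_compD:
  assumes "psplit_epi X Z (B * A)" "phom X Y A" "phom Y Z B"
  shows "psplit_epi Y Z B"
proof -
  obtain r where r: "phom Z X r" "(B * A) * r = snd Z" using assms(1) by (auto simp: psplit_epi_def)
  then have "B * (A * r) = snd Z" using phom_mult_assoc[OF r(1) assms(2,3)] by simp
  then show ?thesis using assms(3) phom_comp[OF r(1) assms(2)] by (auto simp: psplit_epi_def)
qed

lemma psplit_mono_comp_cancel_epi:
  assumes "psplit_mono X Z (B * A)" "psplit_epi X Y A" "phom Y Z B"
  shows "psplit_mono Y Z B"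
proof -
  obtain L where L: "phom Z X L" "L * (B * A) = snd X" using assms(1) by (auto simp: psplit_mono_def)
  obtain a where a: "phom Y X a" "A * a = snd Y" using assms(2) by (auto simp: psplit_epi_def)
  have A: "phom X Y A" using assms(2) by (simp add: psplit_epi_def)
  have AL: "phom Z Y (A * L)" using phom_comp[OF L(1) A] .
  have "(A * L) * B = ((A * L) * B) * (A * a)"
    using phomD(3)[OF phom_comp[OF assms(3) AL]] a(2) by simp
  also have "\<dots> = (A * (L * (B * A))) * a"
    using phom_mult_assoc[OF a(1) A phom_comp[OF assms(3) AL]] phom_mult_assoc[OF A assms(3) AL]
      phom_mult_assoc[OF phom_comp[OF A assms(3)] L(1) A] by simp
  also have "\<dots> = snd Y" using L a phomD(3)[OF A] by simp
  finally show ?thesis using assms(3) AL by (auto simp: psplit_mono_def)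
qed

lemma psplit_epi_comp_cancel_mono:
  assumes "psplit_epi X Z (B * A)" "phom X Y A" "psplit_mono Y Z B"
  shows "psplit_epi X Y A"
proof -
  obtain r where r: "phom Z X r" "(B * A) * r = snd Z" using assms(1) by (auto simp: psplit_epi_def)
  obtain q where q: "phom Z Y q" "q * B = snd Y" using assms(3) by (auto simp: psplit_mono_def)
  have B: "phom Y Z B" using assms(3) by (simp add: psplit_mono_def)
  have rB: "phom Y X (r * B)" using phom_comp[OF B r(1)] .
  have "A * (r * B) = (q * B) * (A * (r * B))"
    using phomD(2)[OF phom_comp[OF rB assms(2)]] q(2) by simp
  also have "\<dots> = q * (((B * A) * r) * B)"
    using phom_mult_assoc[OF phom_comp[OF rB assms(2)] B q(1)] phom_mult_assoc[OF rB assms(2) B]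
      phom_mult_assoc[OF B r(1) phom_comp[OF assms(2) B]] by simp
  also have "\<dots> = snd Y" using r q phomD(2)[OF B] by simp
  finally show ?thesis using assms(2) rB by (auto simp: psplit_epi_def)
qed

definition piso :: "'a::ring_1 pobj \<Rightarrow> 'a pobj \<Rightarrow> 'a mat \<Rightarrow> bool" where
  "piso X Y A \<longleftrightarrow> psplit_mono X Y A \<and> psplit_epi X Y A"

lemma psplit_iff_of_iso_square_mod_pradhom:
  assumes f: "phom A B f" and g: "phom A' B' g"
    and a: "piso A A' a" and b: "piso B B' b"
    and R: "pradhom A B' R" and square: "g * a = b * f + R"
  shows "(psplit_mono A B f \<longleftrightarrow> psplit_mono A' B' g) \<and> (psplit_epi A B f \<longleftrightarrow> psplit_epi A' B' g)"
proof -
  have am: "psplit_mono A A' a" and ae: "psplit_epi A A' a"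
    and bm: "psplit_mono B B' b" and be: "psplit_epi B B' b"
    using a b by (auto simp: piso_def)
  have ha: "phom A A' a" and hb: "phom B B' b" using am bm by (auto simp: psplit_mono_def)
  note c = phomD(1)[OF ha] phomD(1)[OF hb] phomD(1)[OF f] phomD(1)[OF g]
    phomD(1)[OF pradhom_phom[OF R]]
  have square': "b * f = g * a + - R"
  proof -
    have "b * f = (b * f + R) + - R" using c by (intro eq_matI) auto
    then show ?thesis using square by simp
  qed
  have "psplit_mono A' B' g" if "psplit_mono A B f"
  proof -
    have "psplit_mono A B' (g * a)"
      using psplit_mono_add_pradhom[OF psplit_mono_comp[OF that bm] R] square by simp
    then show ?thesis using psplit_mono_comp_cancel_epi[OF _ ae g] by blast
  qed
  moreover have "psplit_epi A' B' g" if "psplit_epi A B f"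
  proof -
    have "psplit_epi A B' (g * a)"
      using psplit_epi_add_pradhom[OF psplit_epi_comp[OF that be] R] square by simp
    then show ?thesis using psplit_epi_compD[OF _ ha g] by blast
  qed
  moreover have "psplit_mono A B f" if "psplit_mono A' B' g"
  proof -
    have "psplit_mono A B' (b * f)"
      using psplit_mono_add_pradhom[OF psplit_mono_comp[OF am that] pradhom_uminus[OF R]] square'
      by simp
    then show ?thesis using psplit_mono_compD[OF _ f hb] by blast
  qed
  moreover have "psplit_epi A B f" if "psplit_epi A' B' g"
  proof -
    have "psplit_epi A B' (b * f)"
      using psplit_epi_add_pradhom[OF psplit_epi_comp[OF ae that] pradhom_uminus[OF R]] square'
      by simp
    then show ?thesis using psplit_epi_comp_cancel_mono[OF _ f bm] by blast
  qed
  ultimately show ?thesis by blast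
qed

section \<open>Complexes and homotopy\<close>

lemma cplxD:
  assumes "cplx J C"
  shows "pradhom (fst C n) (fst C (n + 1)) (snd C n)"
    "snd C (n + 1) * snd C n = 0\<^sub>m (fst (fst C (n + 2))) (fst (fst C n))"
    "n \<notin> J \<Longrightarrow> pmod (fst C n) = {0\<^sub>v (fst (fst C n))}"
  using assms by (auto simp: cplx_def)

lemma cplx_pobj: "cplx J C \<Longrightarrow> pobj (fst C n)"
  using phomD(6)[OF pradhom_phom[OF cplxD(1)]] by blast

lemma cmorD:
  assumes "cmor J C D f"
  shows "cplx J C" "cplx J D" "phom (fst C n) (fst D n) (f n)"
    "snd D n * f n = f (n + 1) * snd C n"
  using assms by (auto simp: cmor_def)

lemma htpc_diff_pradhom:
  assumes H: "htpc C D F G" and C: "cplx J C" and D: "cplx J' D"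
    and F: "phom (fst C n) (fst D n) (F n)" and G: "phom (fst C n) (fst D n) (G n)"
  obtains \<rho> where "pradhom (fst C n) (fst D n) \<rho>" "F n = G n + \<rho>"
proof -
  obtain s where s: "\<And>m. phom (fst C m) (fst D (m - 1)) (s m)"
    "\<And>m. F m - G m = snd D (m - 1) * s m + s (m + 1) * snd C m"
    using H by (auto simp: htpc_def)
  have "pradhom (fst D (n - 1)) (fst D n) (snd D (n - 1))"
    using cplxD(1)[OF D, of "n - 1"] by simp
  moreover have "phom (fst C (n + 1)) (fst D n) (s (n + 1))" using s(1)[of "n + 1"] by simp
  ultimately have "pradhom (fst C n) (fst D n) (snd D (n - 1) * s n + s (n + 1) * snd C n)"
    using pradhom_add[OF pradhom_mult_phom[OF _ s(1)] phom_mult_pradhom[OF cplxD(1)[OF C]]]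
    by blast
  moreover have "F n = G n + (F n - G n)" using phomD(1)[OF F] phomD(1)[OF G]
    by (intro eq_matI) auto
  ultimately show ?thesis using that s(2) by metis
qed

lemma kiso_piso:
  assumes K: "kiso J C D a"
  shows "piso (fst C n) (fst D n) (a n)"
proof -
  obtain b where b: "cmor J D C b" "htpc C C (ccomp b a) (cid C)" "htpc D D (ccomp a b) (cid D)"
    and ma: "cmor J C D a" using K by (auto simp: kiso_def)
  have C: "cplx J C" and D: "cplx J D" using cmorD[OF ma] by auto
  have ha: "phom (fst C n) (fst D n) (a n)" and hb: "phom (fst D n) (fst C n) (b n)"
    using cmorD(3)[OF ma] cmorD(3)[OF b(1)] .
  obtain \<rho> where \<rho>: "pradhom (fst C n) (fst C n) \<rho>" "b n * a n = snd (fst C n) + \<rho>"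
    using htpc_diff_pradhom[OF b(2) C C] phom_comp[OF ha hb] phom_id[OF cplx_pobj[OF C]]
    by (metis ccomp_def cid_def)
  obtain \<rho>' where \<rho>': "pradhom (fst D n) (fst D n) \<rho>'" "a n * b n = snd (fst D n) + \<rho>'"
    using htpc_diff_pradhom[OF b(3) D D] phom_comp[OF hb ha] phom_id[OF cplx_pobj[OF D]]
    by (metis ccomp_def cid_def)
  obtain t where t: "phom (fst C n) (fst C n) t" "t * (snd (fst C n) + \<rho>) = snd (fst C n)"
    using id_plus_pradhom_invertible[OF \<rho>(1)] by metis
  obtain z where z: "phom (fst D n) (fst D n) z" "(snd (fst D n) + \<rho>') * z = snd (fst D n)"
    using id_plus_pradhom_invertible[OF \<rho>'(1)] by metis
  have "(t * b n) * a n = snd (fst C n)" using t \<rho> phom_mult_assoc[OF ha hb t(1)] by simp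
  moreover have "a n * (b n * z) = snd (fst D n)" using z \<rho>' phom_mult_assoc[OF z(1) hb ha] by simp
  ultimately show ?thesis using ha phom_comp[OF hb t(1)] phom_comp[OF z(1) hb]
    by (auto simp: piso_def psplit_mono_def psplit_epi_def)
qed

lemma psplit_iff_of_kiso_square:
  assumes f: "cmor J X Y f" and g: "cmor J X' Y' g"
    and \<alpha>: "kiso J X X' \<alpha>" and \<beta>: "kiso J Y Y' \<beta>"
    and square: "htpc X Y' (ccomp g \<alpha>) (ccomp \<beta> f)"
  shows "(psplit_mono (fst X n) (fst Y n) (f n) \<longleftrightarrow> psplit_mono (fst X' n) (fst Y' n) (g n))
    \<and> (psplit_epi (fst X n) (fst Y n) (f n) \<longleftrightarrow> psplit_epi (fst X' n) (fst Y' n) (g n))"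
proof -
  have \<alpha>n: "piso (fst X n) (fst X' n) (\<alpha> n)" and \<beta>n: "piso (fst Y n) (fst Y' n) (\<beta> n)"
    using kiso_piso[OF \<alpha>] kiso_piso[OF \<beta>] .
  have "phom (fst X n) (fst X' n) (\<alpha> n)" "phom (fst Y n) (fst Y' n) (\<beta> n)"
    using \<alpha>n \<beta>n by (auto simp: piso_def psplit_mono_def)
  then obtain \<rho> where "pradhom (fst X n) (fst Y' n) \<rho>" "g n * \<alpha> n = \<beta> n * f n + \<rho>"
    using htpc_diff_pradhom[OF square cmorD(1)[OF f] cmorD(2)[OF g]]
      phom_comp[OF _ cmorD(3)[OF g]] phom_comp[OF cmorD(3)[OF f]]
    by (metis ccomp_def)
  then show ?thesis
    using psplit_iff_of_iso_square_mod_pradhom[OF cmorD(3)[OF f] cmorD(3)[OF g] \<alpha>n \<beta>n] by blast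
qed

section \<open>Components of irreducible chain maps\<close>

text \<open>Splicing a factorisation g^i = h k through Z into degree i yields the complex
  ... -> X^(i-1) -> Z -> Y^(i+1) -> ... with differentials k d and d h next to Z; g is the
  composite of (..., 1, k, g^(i+1), ...) into it and (..., g^(i-1), h, 1, ...) out of it.\<close>
definition factor_cplx :: "'a::ring_1 cplx \<Rightarrow> 'a cplx \<Rightarrow> int \<Rightarrow> 'a pobj \<Rightarrow> 'a mat \<Rightarrow> 'a mat \<Rightarrow> 'a cplx"
  where "factor_cplx X Y i Z k h =
    ((\<lambda>n. if n < i then fst X n else if n = i then Z else fst Y n),
     (\<lambda>n. if n < i - 1 then snd X n else if n = i - 1 then k * snd X n
          else if n = i then snd Y n * h else snd Y n))"

definition factor_left :: "'a::ring_1 cplx \<Rightarrow> int \<Rightarrow> 'a mat \<Rightarrow> (int \<Rightarrow> 'a mat) \<Rightarrow> int \<Rightarrow> 'a mat"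
  where "factor_left X i k g = (\<lambda>n. if n < i then snd (fst X n) else if n = i then k else g n)"

definition factor_right :: "'a::ring_1 cplx \<Rightarrow> int \<Rightarrow> 'a mat \<Rightarrow> (int \<Rightarrow> 'a mat) \<Rightarrow> int \<Rightarrow> 'a mat"
  where "factor_right Y i h g = (\<lambda>n. if n < i then g n else if n = i then h else snd (fst Y n))"

locale component_factorisation =
  fixes J X Y g i Z k h
  assumes g: "cmor J X Y g"
    and k: "phom (fst X i) Z k" and h: "phom Z (fst Y i) h" and g_i: "g i = h * k"
begin

lemma cplx_X: "cplx J X" and cplx_Y: "cplx J Y"
  using cmorD[OF g] by auto

lemma diff_X: "phom (fst X n) (fst X (n + 1)) (snd X n)"
  and diff_Y: "phom (fst Y n) (fst Y (n + 1)) (snd Y n)"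
  and g_n: "phom (fst X n) (fst Y n) (g n)"
  using pradhom_phom[OF cplxD(1)[OF cplx_X]] pradhom_phom[OF cplxD(1)[OF cplx_Y]] cmorD(3)[OF g] .

lemma pradhom_diff_X_into: "pradhom (fst X (n - 1)) (fst X n) (snd X (n - 1))"
  using cplxD(1)[OF cplx_X, of "n - 1"] by simp

lemma diff_X_into: "phom (fst X (n - 1)) (fst X n) (snd X (n - 1))"
  using pradhom_phom[OF pradhom_diff_X_into] .

lemma factor_cplx_diff_diff:
  defines "E \<equiv> factor_cplx X Y i Z k h"
  shows "snd E (n + 1) * snd E n = 0\<^sub>m (fst (fst E (n + 2))) (fst (fst E n))"
proof -
  consider "n < i - 2" | "n = i - 2" | "n = i - 1" | "n = i" | "n > i" by linarith
  then show ?thesis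
  proof cases
    case 1
    then show ?thesis using cplxD(2)[OF cplx_X, of n] by (simp add: E_def factor_cplx_def)
  next
    case 2
    have "(k * snd X (i - 1)) * snd X (i - 2) = k * (snd X (i - 1) * snd X (i - 1 - 1))"
      using phom_mult_assoc[OF diff_X_into diff_X_into k] by simp
    also have "\<dots> = 0\<^sub>m (fst Z) (fst (fst X (i - 2)))"
      using cplxD(2)[OF cplx_X, of "i - 2"] phomD(1)[OF k] by simp
    finally show ?thesis using 2 by (simp add: E_def factor_cplx_def)
  next
    case 3
    have "(snd Y i * h) * (k * snd X (i - 1)) = snd Y i * (g i * snd X (i - 1))"
      using phom_mult_assoc[OF diff_X_into k phom_comp[OF h diff_Y]]
        phom_mult_assoc[OF diff_X_into phom_comp[OF k h] diff_Y] phom_mult_assoc[OF k h diff_Y] g_i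
      by simp
    also have "\<dots> = (g (i + 1) * snd X i) * snd X (i - 1)"
      using phom_mult_assoc[OF diff_X_into g_n diff_Y] cmorD(4)[OF g, of i] by simp
    also have "\<dots> = g (i + 1) * (snd X (i - 1 + 1) * snd X (i - 1))"
      using phom_mult_assoc[OF diff_X_into diff_X g_n] by simp
    also have "\<dots> = 0\<^sub>m (fst (fst Y (i + 1))) (fst (fst X (i - 1)))"
      using cplxD(2)[OF cplx_X, of "i - 1"] phomD(1)[OF g_n[of "i + 1"]]
      by (simp add: add.commute[of 1 i])
    finally show ?thesis using 3 by (simp add: E_def factor_cplx_def add.commute)
  next
    case 4
    have "snd Y (i + 1) * (snd Y i * h) = (snd Y (i + 1) * snd Y i) * h"
      using phom_mult_assoc[OF h diff_Y diff_Y] by simp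
    also have "\<dots> = 0\<^sub>m (fst (fst Y (i + 2))) (fst Z)"
      using cplxD(2)[OF cplx_Y, of i] phomD(1)[OF h] by simp
    finally show ?thesis using 4 by (simp add: E_def factor_cplx_def)
  next
    case 5
    then show ?thesis using cplxD(2)[OF cplx_Y, of n] by (simp add: E_def factor_cplx_def)
  qed
qed

lemma cplx_factor_cplx:
  assumes i: "i \<in> J"
  shows "cplx J (factor_cplx X Y i Z k h)"
  unfolding cplx_def
proof (intro conjI allI impI factor_cplx_diff_diff)
  fix n
  let ?E = "factor_cplx X Y i Z k h"
  consider "n < i - 1" | "n = i - 1" | "n = i" | "n > i" by linarith
  then show "pradhom (fst ?E n) (fst ?E (n + 1)) (snd ?E n)"
  proof cases
    case 1
    then show ?thesis using cplxD(1)[OF cplx_X, of n] by (simp add: factor_cplx_def)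
  next
    case 2
    then show ?thesis using phom_mult_pradhom[OF pradhom_diff_X_into k]
      by (simp add: factor_cplx_def)
  next
    case 3
    then show ?thesis using pradhom_mult_phom[OF cplxD(1)[OF cplx_Y, of i] h]
      by (simp add: factor_cplx_def)
  next
    case 4
    then show ?thesis using cplxD(1)[OF cplx_Y, of n] by (simp add: factor_cplx_def)
  qed
next
  fix n assume "n \<notin> J"
  then show "pmod (fst (factor_cplx X Y i Z k h) n) = {0\<^sub>v (fst (fst (factor_cplx X Y i Z k h) n))}"
    using i cplxD(3)[OF cplx_X] cplxD(3)[OF cplx_Y] by (auto simp: factor_cplx_def)
qed

lemma cmor_factor_left:
  assumes i: "i \<in> J"
  shows "cmor J X (factor_cplx X Y i Z k h) (factor_left X i k g)"
  unfolding cmor_def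
proof (intro conjI allI cplx_X cplx_factor_cplx[OF i])
  fix n
  let ?E = "factor_cplx X Y i Z k h" and ?k = "factor_left X i k g"
  show "phom (fst X n) (fst ?E n) (?k n)"
    using phom_id[OF cplx_pobj[OF cplx_X]] k g_n by (auto simp: factor_cplx_def factor_left_def)
  consider "n < i - 1" | "n = i - 1" | "n = i" | "n > i" by linarith
  then show "snd ?E n * ?k n = ?k (n + 1) * snd X n"
  proof cases
    case 1
    then show ?thesis using phomD(2,3)[OF diff_X] by (simp add: factor_cplx_def factor_left_def)
  next
    case 2
    then show ?thesis
      using phom_mult_assoc[OF phom_id[OF cplx_pobj[OF cplx_X, of "i - 1"]] diff_X_into k]
        phomD(3)[OF diff_X_into[of i]]
      by (simp add: factor_cplx_def factor_left_def)
  next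
    case 3
    then show ?thesis
      using phom_mult_assoc[OF k h diff_Y] g_i cmorD(4)[OF g, of i]
      by (simp add: factor_cplx_def factor_left_def)
  next
    case 4
    then show ?thesis using cmorD(4)[OF g, of n] by (simp add: factor_cplx_def factor_left_def)
  qed
qed

lemma cmor_factor_right:
  assumes i: "i \<in> J"
  shows "cmor J (factor_cplx X Y i Z k h) Y (factor_right Y i h g)"
  unfolding cmor_def
proof (intro conjI allI cplx_Y cplx_factor_cplx[OF i])
  fix n
  let ?E = "factor_cplx X Y i Z k h" and ?h = "factor_right Y i h g"
  show "phom (fst ?E n) (fst Y n) (?h n)"
    using phom_id[OF cplx_pobj[OF cplx_Y]] h g_n by (auto simp: factor_cplx_def factor_right_def)
  consider "n < i - 1" | "n = i - 1" | "n = i" | "n > i" by linarith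
  then show "snd Y n * ?h n = ?h (n + 1) * snd ?E n"
  proof cases
    case 1
    then show ?thesis using cmorD(4)[OF g, of n] by (simp add: factor_cplx_def factor_right_def)
  next
    case 2
    then show ?thesis
      using phom_mult_assoc[OF diff_X_into k h] g_i cmorD(4)[OF g, of "i - 1"]
      by (simp add: factor_cplx_def factor_right_def)
  next
    case 3
    then show ?thesis using phomD(2)[OF phom_comp[OF h diff_Y]]
      by (simp add: factor_cplx_def factor_right_def)
  next
    case 4
    then show ?thesis using phomD(2,3)[OF diff_Y] by (simp add: factor_cplx_def factor_right_def)
  qed
qed

lemma ccomp_factor: "g = ccomp (factor_right Y i h g) (factor_left X i k g)"
proof
  fix n
  show "g n = ccomp (factor_right Y i h g) (factor_left X i k g) n"
    using g_i phomD(2,3)[OF g_n] by (auto simp: ccomp_def factor_right_def factor_left_def)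
qed

lemma cirr_component_factor:
  assumes irr: "cirr J X Y g" and i: "i \<in> J"
  shows "psplit_mono (fst X i) Z k \<or> psplit_epi Z (fst Y i) h"
proof -
  let ?E = "factor_cplx X Y i Z k h"
  have "csplit_mono J X ?E (factor_left X i k g) \<or> csplit_epi J ?E Y (factor_right Y i h g)"
    using irr cmor_factor_left[OF i] cmor_factor_right[OF i] ccomp_factor
    unfolding cirr_def by blast
  then show ?thesis
  proof
    assume "csplit_mono J X ?E (factor_left X i k g)"
    then obtain r where r: "cmor J ?E X r" "ccomp r (factor_left X i k g) = cid X"
      by (auto simp: csplit_mono_def)
    have "phom Z (fst X i) (r i)" using cmorD(3)[OF r(1), of i] by (simp add: factor_cplx_def)
    moreover have "r i * k = snd (fst X i)"
      using fun_cong[OF r(2), of i] by (simp add: ccomp_def cid_def factor_left_def)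
    ultimately show ?thesis using k by (auto simp: psplit_mono_def)
  next
    assume "csplit_epi J ?E Y (factor_right Y i h g)"
    then obtain r where r: "cmor J Y ?E r" "ccomp (factor_right Y i h g) r = cid Y"
      by (auto simp: csplit_epi_def)
    have "phom (fst Y i) Z (r i)" using cmorD(3)[OF r(1), of i] by (simp add: factor_cplx_def)
    moreover have "h * r i = snd (fst Y i)"
      using fun_cong[OF r(2), of i] by (simp add: ccomp_def cid_def factor_right_def)
    ultimately show ?thesis using h by (auto simp: psplit_epi_def)
  qed
qed

end

lemma cirr_component_pirr:
  assumes irr: "cirr J X Y g" and i: "i \<in> J"
    and not_mono: "\<not> psplit_mono (fst X i) (fst Y i) (g i)"
    and not_epi: "\<not> psplit_epi (fst X i) (fst Y i) (g i)"
  shows "pirr (fst X i) (fst Y i) (g i)"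
  unfolding pirr_def
proof (intro conjI allI impI not_mono not_epi)
  have g: "cmor J X Y g" using irr by (simp add: cirr_def)
  then show "phom (fst X i) (fst Y i) (g i)" by (rule cmorD(3))
  fix Z k h assume "phom (fst X i) Z k \<and> phom Z (fst Y i) h \<and> g i = h * k"
  then interpret component_factorisation J X Y g i Z k h
    using g by unfold_locales auto
  show "psplit_mono (fst X i) Z k \<or> psplit_epi Z (fst Y i) h"
    using cirr_component_factor[OF irr i] .
qed

lemma psplit_mono_of_zero_source:
  assumes A: "phom X Y A" and zero: "pmod X = {0\<^sub>v (fst X)}"
  shows "psplit_mono X Y A"
proof -
  note c = phomD[OF A]
  have e: "snd X = 0\<^sub>m (fst X) (fst X)"
  proof (rule eq_matI)
    fix i j assume i: "i < dim_row (0\<^sub>m (fst X) (fst X) :: 'a mat)"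
      and j: "j < dim_col (0\<^sub>m (fst X) (fst X) :: 'a mat)"
    have "col (snd X) j = 0\<^sub>v (fst X)" using col_pmod[OF c(6)] j zero by auto
    then have "col (snd X) j $ i = 0" using i by simp
    then show "snd X $$ (i, j) = 0\<^sub>m (fst X) (fst X) $$ (i, j)" using i j c(4) by simp
  qed (use c(4) in auto)
  have "phom Y X (0\<^sub>m (fst X) (fst Y))" using c(6,7) e by (auto simp: phom_def pobj_def)
  moreover have "0\<^sub>m (fst X) (fst Y) * A = snd X" using e c(1) by simp
  ultimately show ?thesis using A by (auto simp: psplit_mono_def)
qed

lemma sirreducible_transfer:
  assumes f: "cmor J X Y f" and g: "cirr J X' Y' g"
    and mono_iff: "\<And>n. psplit_mono (fst X n) (fst Y n) (f n) \<longleftrightarrow> psplit_mono (fst X' n) (fst Y' n) (g n)"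
    and epi_iff: "\<And>n. psplit_epi (fst X n) (fst Y n) (f n) \<longleftrightarrow> psplit_epi (fst X' n) (fst Y' n) (g n)"
    and sirr: "sirreducible X Y f"
  shows "sirreducible X' Y' g"
proof -
  obtain i0 where i0: "pirr (fst X i0) (fst Y i0) (f i0)"
    "\<forall>n<i0. psplit_epi (fst X n) (fst Y n) (f n)"
    "\<forall>n>i0. psplit_mono (fst X n) (fst Y n) (f n)"
    using sirr by (auto simp: sirreducible_def)
  have "i0 \<in> J"
  proof (rule ccontr)
    assume "i0 \<notin> J"
    then have "psplit_mono (fst X i0) (fst Y i0) (f i0)"
      using psplit_mono_of_zero_source[OF cmorD(3)[OF f]] cplxD(3)[OF cmorD(1)[OF f]] by blast
    then show False using i0(1) by (simp add: pirr_def)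
  qed
  moreover have "\<not> psplit_mono (fst X' i0) (fst Y' i0) (g i0)"
    "\<not> psplit_epi (fst X' i0) (fst Y' i0) (g i0)"
    using i0(1) mono_iff epi_iff by (auto simp: pirr_def)
  ultimately have "pirr (fst X' i0) (fst Y' i0) (g i0)"
    using cirr_component_pirr[OF g] by blast
  moreover have "n = i0" if "pirr (fst X' n) (fst Y' n) (g n)" for n
    using that i0(2,3) mono_iff epi_iff linorder_neqE by (metis pirr_def)
  ultimately show ?thesis
    using i0(2,3) mono_iff epi_iff unfolding sirreducible_def by blast
qed

theorem lemma2:
  fixes emb :: "'k::field \<Rightarrow> 'a::ring_1" and J :: "int set"
    and X Y X' Y' :: "'a cplx" and f g \<alpha> \<beta> :: "int \<Rightarrow> 'a mat"
  assumes "fd_nonss_algebra emb" and "interval J"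
    and "cmor J X Y f" and "cmor J X' Y' g"
    and "kiso J X X' \<alpha>" and "kiso J Y Y' \<beta>"
    and "htpc X Y' (ccomp g \<alpha>) (ccomp \<beta> f)"
  shows "(smonic X Y f \<longrightarrow> smonic X' Y' g)
       \<and> (sepic X Y f \<longrightarrow> sepic X' Y' g)
       \<and> (cirr J X Y f \<and> cirr J X' Y' g \<and> sirreducible X Y f \<longrightarrow> sirreducible X' Y' g)"
proof -
  have iff: "(psplit_mono (fst X n) (fst Y n) (f n) \<longleftrightarrow> psplit_mono (fst X' n) (fst Y' n) (g n))
      \<and> (psplit_epi (fst X n) (fst Y n) (f n) \<longleftrightarrow> psplit_epi (fst X' n) (fst Y' n) (g n))" for n
    using psplit_iff_of_kiso_square[OF assms(3-7)] .
  then have "smonic X Y f \<longrightarrow> smonic X' Y' g" "sepic X Y f \<longrightarrow> sepic X' Y' g"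
    by (auto simp: smonic_def sepic_def)
  moreover have "cirr J X' Y' g \<and> sirreducible X Y f \<longrightarrow> sirreducible X' Y' g"
    using sirreducible_transfer[OF assms(3)] iff by blast
  ultimately show ?thesis by blast
qed

end
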